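(* Let $m\ge3$, $C$ a set of $m$ candidates, $T$ the set of all $m!$ strict rankings of $C$, $w=(w_1,\dots,w_m)$ with $1=w_1\ge\cdots\ge w_m=0$, $\bar w=(w_1+\cdots+w_m)/m$, and $\sigma_t(\alpha)=w_i$ where $i$ is the position of $\alpha$ in $t\in T$. Let $(N_t)_{t\in T}$ be nonnegative integers with $\sum_tN_t=n$ and $|\alpha|=\sum_tN_t\sigma_t(\alpha)$. Suppose $|a|>|\alpha|$ for all $\alpha\ne a$, and $b\ne a$ satisfies $|b|\ge|\alpha|$ for all $\alpha\ne a$. Let $T_b$ be the set of types ranking $b$ first, $T_i$ ($1\le i\le m-1$) the set of types ranking $b$ in position $i$ and $a$ in position $i+1$, and $T_{ba}=\bigcup_{i=1}^{m-1}T_i$. Suppose nonnegative reals $z_1,\dots,z_{m-1}$ satisfy $$\sum_{i=1}^{m-1}z_i(1-w_i+w_{i+1})\ge|a|-|b|,\qquad \sum_{i=1}^{m-1}z_i(1-w_i)\ge n\bar w-|b|.$$ Then there exist reals $x_t\ge0$ ($t\in T_{ba}$) and $y_t\ge0$ ($t\in T_b$) with $\sum_{t\in T_i}x_t=z_i$ for each $i=1,\dots,m-1$, $\sum_{t\in T_b}y_t=\sum_{t\in T_{ba}}x_t$, and $$\sum_{t\in T_b}y_t(1-\sigma_t(\alpha))-\sum_{t\in T_{ba}}x_t(\sigma_t(b)-\sigma_t(\alpha))\ge|\alpha|-|b|\quad\text{for all }\alpha\ne b.$$ *)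

theory Defs
  imports Complex_Main
begin

(* A strict ranking ("type") of the candidate set C is a list enumerating C without repetition;
   the first element of the list is ranked first. *)
definition rankings :: "'c set \<Rightarrow> 'c list set" where
  "rankings C = {t. distinct t \<and> set t = C}"

(* 1-based position of candidate \<alpha> in ranking t *)
definition pos :: "'c list \<Rightarrow> 'c \<Rightarrow> nat" where
  "pos t \<alpha> = Suc (THE i. i < length t \<and> t ! i = \<alpha>)"

definition sigma :: "(nat \<Rightarrow> real) \<Rightarrow> 'c list \<Rightarrow> 'c \<Rightarrow> real" where
  "sigma w t \<alpha> = w (pos t \<alpha>)"

definition score :: "'c set \<Rightarrow> (nat \<Rightarrow> real) \<Rightarrow> ('c list \<Rightarrow> nat) \<Rightarrow> 'c \<Rightarrow> real" where
  "score C w N \<alpha> = (\<Sum>t\<in>rankings C. real (N t) * sigma w t \<alpha>)"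

end

(*
  A voter of a type that ranks b at position i and a at position i + 1 is moved to a type that ranks
  b first. Choosing the two rankings suitably (b takes the top slot from some c, and possibly a drops
  to the bottom while some d takes its slot), every such exchange raises b's lead over all other
  candidates by an amount that depends on i only through u = 1 - w_i and v = w_(i+1). Mixing the
  exchanges at level i with total weight z_i according to one distribution over the configurations
  (d, c), the lead gained over each candidate becomes a fixed combination of B = sum z_i (1 - w_i) and
  W = sum z_i w_(i+1). The first hypothesis on z lets the demotions of a cover the gap |a| - |b|;
  the second, combined with the fact that all scores add up to n times the sum of the weights, leaves
  enough room to spread the losses of the demotions over the other candidates in proportion to
  their slack |b| - |c|.
*)

theory Submission
  imports Defs
begin

lemma pos_nth:
  assumes "distinct t" "k < length t"
  shows "pos t (t ! k) = Suc k"
  unfolding pos_def using assms by (auto simp: nth_eq_iff_index_eq)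

lemma finite_rankings: "finite C \<Longrightarrow> finite (rankings C)"
  by (rule finite_subset[OF _ finite_lists_length_eq[of C "card C"]])
    (auto simp: rankings_def distinct_card)

lemma bij_betw_pos:
  assumes "t \<in> rankings C"
  shows "bij_betw (pos t) C {1..card C}"
proof -
  have t: "distinct t" "set t = C" "length t = card C"
    using assms by (auto simp: rankings_def distinct_card)
  have pos_mem: "pos t c \<in> {1..card C} \<and> t ! (pos t c - 1) = c" if "c \<in> C" for c
  proof -
    have "c \<in> set t"
      using that t(2) by simp
    then obtain k where "k < length t" "t ! k = c"
      by (auto simp: in_set_conv_nth)
    then show ?thesis using pos_nth[OF t(1)] t by auto
  qed
  show ?thesis
  proof (rule bij_betw_byWitness[where f' = "\<lambda>j. t ! (j - 1)"])
    show "\<forall>j\<in>{1..card C}. pos t (t ! (j - 1)) = j"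
      using pos_nth[OF t(1)] t(3) by auto
    show "(\<lambda>j. t ! (j - 1)) ` {1..card C} \<subseteq> C"
      using t by auto
  qed (use pos_mem in blast)+
qed

lemma ranking_of_bij:
  assumes "bij_betw p C {1..card C}"
  shows "\<exists>t\<in>rankings C. \<forall>c\<in>C. pos t c = p c"
proof
  define t where "t = map (inv_into C p) [1..<Suc (card C)]"
  have "bij_betw (inv_into C p) {1..card C} C"
    using assms by (rule bij_betw_inv_into)
  moreover have "set [1..<Suc (card C)] = {1..card C}"
    by (simp only: set_upt atLeastLessThanSuc_atLeastAtMost)
  ultimately show "t \<in> rankings C"
    unfolding t_def rankings_def bij_betw_def
    by (simp only: mem_Collect_eq distinct_map set_map distinct_upt)
  show "\<forall>c\<in>C. pos t c = p c"
  proof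
    fix c assume "c \<in> C"
    then have "p c \<in> {1..card C}" "inv_into C p (p c) = c"
      using assms by (auto simp: bij_betw_def)
    moreover have "distinct t" using \<open>t \<in> rankings C\<close> by (simp add: rankings_def)
    ultimately show "pos t c = p c"
      using pos_nth[of t "p c - 1"] by (auto simp: t_def simp del: upt_Suc)
  qed
qed

lemma bij_betw_extend:
  assumes "finite C" "finite S" "card S = card C" "D \<subseteq> C" "inj_on q D" "q ` D \<subseteq> S"
  obtains p where "bij_betw p C S" "\<forall>x\<in>D. p x = q x"
proof -
  have "finite D" using assms(1,4) by (rule finite_subset[rotated])
  then have "card (C - D) = card (S - q ` D)"
    using assms by (simp add: card_Diff_subset card_image)
  then obtain h where "bij_betw h (C - D) (S - q ` D)"
    using assms(1,2) finite_same_card_bij by blast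
  then have "bij_betw (\<lambda>x. if x \<in> D then q x else h x) (D \<union> (C - D)) (q ` D \<union> (S - q ` D))"
    using assms(5) by (intro bij_betw_disjoint_Un) (auto simp: bij_betw_def)
  moreover have "D \<union> (C - D) = C" "q ` D \<union> (S - q ` D) = S" using assms(4,6) by auto
  ultimately show thesis by (intro that) auto
qed

lemma bij_betw_override_on:
  assumes "bij_betw p C S" "D \<subseteq> C" "bij_betw q D (p ` D)"
  shows "bij_betw (override_on p q D) C S"
proof -
  have "bij_betw p (C - D) (p ` (C - D))"
    using assms(1) by (rule bij_betw_subset) auto
  then have "bij_betw (\<lambda>x. if x \<in> D then q x else p x) (D \<union> (C - D)) (p ` D \<union> p ` (C - D))"
    using assms by (intro bij_betw_disjoint_Un) (auto simp: bij_betw_def inj_on_def)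
  moreover have "D \<union> (C - D) = C" "p ` D \<union> p ` (C - D) = S"
    using assms(1,2) by (auto simp: bij_betw_def)
  ultimately show ?thesis by (simp add: override_on_def)
qed

definition lead_gain :: "(nat \<Rightarrow> real) \<Rightarrow> 'c \<Rightarrow> 'c list \<Rightarrow> 'c list \<Rightarrow> 'c \<Rightarrow> real" where
  "lead_gain w b s s' \<alpha> = (sigma w s' b - sigma w s' \<alpha>) - (sigma w s b - sigma w s \<alpha>)"

lemma exists_rankings_with_lead_gain:
  assumes "finite C" "D \<subseteq> C" "b \<in> D" "inj_on q D" "inj_on q' D"
    "q ` D \<subseteq> {1..card C}" "q' ` D = q ` D"
  obtains s s' where "s \<in> rankings C" "s' \<in> rankings C" "\<forall>x\<in>D. pos s x = q x \<and> pos s' x = q' x"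
    "\<forall>\<alpha>\<in>C. lead_gain w b s s' \<alpha> = w (q' b) - w (q b) + (if \<alpha> \<in> D then w (q \<alpha>) - w (q' \<alpha>) else 0)"
proof -
  obtain p where p: "bij_betw p C {1..card C}" "\<forall>x\<in>D. p x = q x"
    using bij_betw_extend[OF assms(1) _ _ assms(2,4,6)] by auto
  have "bij_betw q' D (p ` D)"
    using assms(5,7) p(2) by (simp add: bij_betw_def)
  then have p': "bij_betw (override_on p q' D) C {1..card C}"
    using p(1) assms(2) by (rule bij_betw_override_on[rotated 2])
  obtain s s' where s: "s \<in> rankings C" "\<forall>c\<in>C. pos s c = p c"
    and s': "s' \<in> rankings C" "\<forall>c\<in>C. pos s' c = override_on p q' D c"
    using ranking_of_bij[OF p(1)] ranking_of_bij[OF p'] by blast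
  show thesis
    using s s' p(2) assms(2,3) by (intro that[of s s']) (auto simp: lead_gain_def sigma_def subset_iff)
qed

(* The lead of b gained at level i, for u = 1 - w i and v = w (i + 1), when b takes the top slot
   from c and, unless d = a, a drops to the last place and d takes its slot i + 1. *)
definition exchange_effect :: "real \<Rightarrow> real \<Rightarrow> 'c \<Rightarrow> 'c \<Rightarrow> 'c \<Rightarrow> 'c \<Rightarrow> real" where
  "exchange_effect u v a d c \<alpha> = u * (1 + of_bool (\<alpha> = c)) + v * (of_bool (\<alpha> = a) - of_bool (\<alpha> = d))"

lemma exists_exchange_keeping_a:
  assumes "finite C" "card C = m" "w 1 = 1" "a \<in> C" "b \<in> C" "a \<noteq> b" "c \<in> C - {a, b}" "1 \<le> i" "i < m"
  obtains s s' where "s \<in> rankings C" "pos s b = i" "pos s a = i + 1" "s' \<in> rankings C" "pos s' b = 1"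
    "\<forall>\<alpha>\<in>C - {b}. lead_gain w b s s' \<alpha> = exchange_effect (1 - w i) (w (i + 1)) a a c \<alpha>"
proof (cases "i = 1")
  case True
  define q where "q = (\<lambda>x. if x = b then i else i + 1)"
  obtain s s' where "s \<in> rankings C" "s' \<in> rankings C" "\<forall>x\<in>{b, a}. pos s x = q x \<and> pos s' x = q x"
    "\<forall>\<alpha>\<in>C. lead_gain w b s s' \<alpha> = w (q b) - w (q b) + (if \<alpha> \<in> {b, a} then w (q \<alpha>) - w (q \<alpha>) else 0)"
    by (rule exists_rankings_with_lead_gain[of C "{b, a}" b q q w]) (use assms in \<open>auto simp: q_def\<close>)
  then show thesis
    using True assms by (intro that[of s s']) (auto simp: q_def exchange_effect_def)
next
  case False
  define q where "q = (\<lambda>x. if x = b then i else if x = a then i + 1 else 1)"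
  define q' where "q' = (\<lambda>x. if x = b then 1 else if x = a then i + 1 else i)"
  obtain s s' where "s \<in> rankings C" "s' \<in> rankings C" "\<forall>x\<in>{b, a, c}. pos s x = q x \<and> pos s' x = q' x"
    "\<forall>\<alpha>\<in>C. lead_gain w b s s' \<alpha> = w (q' b) - w (q b) + (if \<alpha> \<in> {b, a, c} then w (q \<alpha>) - w (q' \<alpha>) else 0)"
    by (rule exists_rankings_with_lead_gain[of C "{b, a, c}" b q q' w]) (use assms False in \<open>auto simp: q_def q'_def\<close>)
  then show thesis
    using False assms by (intro that[of s s']) (auto simp: q_def q'_def exchange_effect_def)
qed

(* For 1 < i < m - 1, c and d occupy the first and the last slot of s, so they must differ; for
   i = 1 the gain over c vanishes and for i = m - 1 the loss of d vanishes, so one of them stays. *)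
lemma exists_exchange_demoting_a:
  assumes "finite C" "card C = m" "3 \<le> m" "w 1 = 1" "w m = 0" "a \<in> C" "b \<in> C" "a \<noteq> b"
    and "d \<in> C - {a, b}" "c \<in> C - {a, b}" "1 \<le> i" "i < m" "d \<noteq> c \<or> i = 1 \<or> i = m - 1"
  obtains s s' where "s \<in> rankings C" "pos s b = i" "pos s a = i + 1" "s' \<in> rankings C" "pos s' b = 1"
    "\<forall>\<alpha>\<in>C - {b}. lead_gain w b s s' \<alpha> = exchange_effect (1 - w i) (w (i + 1)) a d c \<alpha>"
proof -
  consider (top) "i = 1" | (last) "i = m - 1" "i \<noteq> 1" | (middle) "2 \<le> i" "i \<le> m - 2" "d \<noteq> c"
    using assms(11-13) by linarith
  then show thesis
  proof cases
    case top
    define q where "q = (\<lambda>x. if x = b then 1 else if x = a then i + 1 else m)"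
    define q' where "q' = (\<lambda>x. if x = b then 1 else if x = a then m else i + 1)"
    obtain s s' where "s \<in> rankings C" "s' \<in> rankings C" "\<forall>x\<in>{b, a, d}. pos s x = q x \<and> pos s' x = q' x"
      "\<forall>\<alpha>\<in>C. lead_gain w b s s' \<alpha> = w (q' b) - w (q b) + (if \<alpha> \<in> {b, a, d} then w (q \<alpha>) - w (q' \<alpha>) else 0)"
      by (rule exists_rankings_with_lead_gain[of C "{b, a, d}" b q q' w]) (use assms top in \<open>auto simp: q_def q'_def\<close>)
    then show thesis
      using top assms by (intro that[of s s']) (auto simp: q_def q'_def exchange_effect_def)
  next
    case last
    define q where "q = (\<lambda>x. if x = b then i else if x = a then m else 1)"
    define q' where "q' = (\<lambda>x. if x = b then 1 else if x = a then m else i)"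
    obtain s s' where "s \<in> rankings C" "s' \<in> rankings C" "\<forall>x\<in>{b, a, c}. pos s x = q x \<and> pos s' x = q' x"
      "\<forall>\<alpha>\<in>C. lead_gain w b s s' \<alpha> = w (q' b) - w (q b) + (if \<alpha> \<in> {b, a, c} then w (q \<alpha>) - w (q' \<alpha>) else 0)"
      by (rule exists_rankings_with_lead_gain[of C "{b, a, c}" b q q' w]) (use assms last in \<open>auto simp: q_def q'_def\<close>)
    then show thesis
      using last assms by (intro that[of s s']) (auto simp: q_def q'_def exchange_effect_def)
  next
    case middle
    define q where "q = (\<lambda>x. if x = b then i else if x = a then i + 1 else if x = d then m else 1)"
    define q' where "q' = (\<lambda>x. if x = b then 1 else if x = a then m else if x = d then i + 1 else i)"
    obtain s s' where "s \<in> rankings C" "s' \<in> rankings C" "\<forall>x\<in>{b, a, d, c}. pos s x = q x \<and> pos s' x = q' x"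
      "\<forall>\<alpha>\<in>C. lead_gain w b s s' \<alpha> = w (q' b) - w (q b) + (if \<alpha> \<in> {b, a, d, c} then w (q \<alpha>) - w (q' \<alpha>) else 0)"
      by (rule exists_rankings_with_lead_gain[of C "{b, a, d, c}" b q q' w]) (use assms middle in \<open>auto simp: q_def q'_def\<close>)
    then show thesis
      using middle assms by (intro that[of s s']) (auto simp: q_def q'_def exchange_effect_def)
  qed
qed

lemma exists_exchange_pairs:
  fixes C :: "'c set" and a b :: 'c and \<omega> :: "'c \<times> 'c \<Rightarrow> real"
  defines "E \<equiv> C - {a, b}"
  assumes "finite C" "card C = m" "3 \<le> m" "w 1 = 1" "w m = 0" "a \<in> C" "b \<in> C" "a \<noteq> b"
    and "m = 3 \<or> (\<forall>c\<in>E. \<omega> (c, c) = 0)"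
  obtains S :: "nat \<times> 'c \<times> 'c \<Rightarrow> 'c list \<times> 'c list" where
    "\<And>i d c. i \<in> {1..m-1} \<Longrightarrow> d \<in> insert a E \<Longrightarrow> c \<in> E \<Longrightarrow>
      fst (S (i, d, c)) \<in> {t \<in> rankings C. pos t b = i \<and> pos t a = i + 1}
      \<and> snd (S (i, d, c)) \<in> {t \<in> rankings C. pos t b = 1}
      \<and> (\<omega> (d, c) \<noteq> 0 \<longrightarrow> (\<forall>\<alpha>\<in>C - {b}.
          lead_gain w b (fst (S (i, d, c))) (snd (S (i, d, c))) \<alpha> = exchange_effect (1 - w i) (w (i + 1)) a d c \<alpha>))"
proof -
  define Q where "Q i d c p \<longleftrightarrow> fst p \<in> {t \<in> rankings C. pos t b = i \<and> pos t a = i + 1}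
    \<and> snd p \<in> {t \<in> rankings C. pos t b = 1}
    \<and> (\<omega> (d, c) \<noteq> 0 \<longrightarrow>
        (\<forall>\<alpha>\<in>C - {b}. lead_gain w b (fst p) (snd p) \<alpha> = exchange_effect (1 - w i) (w (i + 1)) a d c \<alpha>))"
    for i d c p
  have "\<exists>p. Q i d c p" if idc: "i \<in> {1..m-1}" "d \<in> insert a E" "c \<in> E" for i d c
  proof -
    have i: "1 \<le> i" "i < m"
      using idc(1) assms(4) by auto
    obtain s\<^sub>0 s\<^sub>0' where keep: "s\<^sub>0 \<in> rankings C" "pos s\<^sub>0 b = i" "pos s\<^sub>0 a = i + 1" "s\<^sub>0' \<in> rankings C"
      "pos s\<^sub>0' b = 1" "\<forall>\<alpha>\<in>C - {b}. lead_gain w b s\<^sub>0 s\<^sub>0' \<alpha> = exchange_effect (1 - w i) (w (i + 1)) a a c \<alpha>"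
      by (rule exists_exchange_keeping_a[of C m w a b c i, OF assms(2,3,5,7-9) _ i]) (use idc in \<open>simp add: E_def\<close>)
    show ?thesis
    proof (cases "d \<noteq> a \<and> \<omega> (d, c) \<noteq> 0")
      case True
      then have admissible: "d \<noteq> c \<or> i = 1 \<or> i = m - 1"
        using idc(3) assms(10) i by (auto simp: E_def)
      obtain s s' where "s \<in> rankings C" "pos s b = i" "pos s a = i + 1" "s' \<in> rankings C" "pos s' b = 1"
        "\<forall>\<alpha>\<in>C - {b}. lead_gain w b s s' \<alpha> = exchange_effect (1 - w i) (w (i + 1)) a d c \<alpha>"
        by (rule exists_exchange_demoting_a[of C m w a b d c i, OF assms(2-9) _ _ i admissible])
          (use idc True in \<open>auto simp: E_def\<close>)
      then show ?thesis
        by (intro exI[of _ "(s, s')"]) (simp add: Q_def)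
    next
      case False
      then show ?thesis
        using keep by (intro exI[of _ "(s\<^sub>0, s\<^sub>0')"]) (auto simp: Q_def)
    qed
  qed
  then have "Q i d c (SOME p. Q i d c p)" if "i \<in> {1..m-1}" "d \<in> insert a E" "c \<in> E" for i d c
    using that by (blast intro: someI_ex)
  then show thesis
    by (intro that[of "\<lambda>(i, d, c). SOME p. Q i d c p"]) (simp add: Q_def)
qed

definition pushforward :: "('k \<Rightarrow> real) \<Rightarrow> 'k set \<Rightarrow> ('k \<Rightarrow> 't) \<Rightarrow> 't \<Rightarrow> real" where
  "pushforward \<nu> K f t = sum \<nu> {k \<in> K. f k = t}"

lemma pushforward_nonneg: "\<forall>k\<in>K. 0 \<le> \<nu> k \<Longrightarrow> 0 \<le> pushforward \<nu> K f t"
  unfolding pushforward_def by (auto intro: sum_nonneg)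

lemma sum_pushforward:
  assumes "finite K" "finite T"
  shows "(\<Sum>t\<in>T. pushforward \<nu> K f t * g t) = (\<Sum>k | k \<in> K \<and> f k \<in> T. \<nu> k * g (f k))"
proof -
  have "pushforward \<nu> K f t * g t = (\<Sum>k | k \<in> {k\<in>K. f k \<in> T} \<and> f k = t. \<nu> k * g (f k))"
    if "t \<in> T" for t
  proof -
    have "{k. k \<in> {k\<in>K. f k \<in> T} \<and> f k = t} = {k\<in>K. f k = t}"
      using that by auto
    then show ?thesis
      by (simp add: pushforward_def sum_distrib_right)
  qed
  then have "(\<Sum>t\<in>T. pushforward \<nu> K f t * g t)
      = (\<Sum>t\<in>T. \<Sum>k | k \<in> {k\<in>K. f k \<in> T} \<and> f k = t. \<nu> k * g (f k))"
    by (rule sum.cong[OF refl])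
  also have "\<dots> = (\<Sum>k | k \<in> K \<and> f k \<in> T. \<nu> k * g (f k))"
    using assms by (intro sum.group) auto
  finally show ?thesis .
qed

lemma sum_pushforward_set:
  assumes "finite K" "finite T"
  shows "sum (pushforward \<nu> K f) T = sum \<nu> {k \<in> K. f k \<in> T}"
  using sum_pushforward[OF assms, of \<nu> f "\<lambda>_. 1"] by simp

lemma sum_pushforward_image:
  assumes "finite K" "finite T" "f ` K \<subseteq> T"
  shows "(\<Sum>t\<in>T. pushforward \<nu> K f t * g t) = (\<Sum>k\<in>K. \<nu> k * g (f k))"
proof -
  have "{k. k \<in> K \<and> f k \<in> T} = K"
    using assms(3) by auto
  then show ?thesis
    using sum_pushforward[OF assms(1,2)] by simp
qed

lemma margin_change_pushforward:
  assumes "finite K" "finite P" "finite Q" "\<forall>k\<in>K. fst (S k) \<in> P \<and> snd (S k) \<in> Q"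
    and "\<forall>t\<in>Q. pos t b = 1" "w 1 = 1"
  shows "(\<Sum>t\<in>Q. pushforward \<nu> K (snd \<circ> S) t * (1 - sigma w t \<alpha>))
      - (\<Sum>t\<in>P. pushforward \<nu> K (fst \<circ> S) t * (sigma w t b - sigma w t \<alpha>))
    = (\<Sum>k\<in>K. \<nu> k * lead_gain w b (fst (S k)) (snd (S k)) \<alpha>)"
proof -
  have "(\<Sum>t\<in>Q. pushforward \<nu> K (snd \<circ> S) t * (1 - sigma w t \<alpha>))
      = (\<Sum>k\<in>K. \<nu> k * (sigma w (snd (S k)) b - sigma w (snd (S k)) \<alpha>))"
    using assms by (subst sum_pushforward_image) (auto simp: sigma_def intro!: sum.cong)
  moreover have "(\<Sum>t\<in>P. pushforward \<nu> K (fst \<circ> S) t * (sigma w t b - sigma w t \<alpha>))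
      = (\<Sum>k\<in>K. \<nu> k * (sigma w (fst (S k)) b - sigma w (fst (S k)) \<alpha>))"
    using assms by (subst sum_pushforward_image) auto
  ultimately show ?thesis
    by (simp add: lead_gain_def sum_subtractf[symmetric] right_diff_distrib)
qed

lemma sum_weighted_exchange_effect:
  "(\<Sum>k\<in>I \<times> J. z (fst k) * \<omega> (snd k) * exchange_effect (u (fst k)) (v (fst k)) a (fst (snd k)) (snd (snd k)) \<alpha>)
    = (\<Sum>j\<in>J. \<omega> j * exchange_effect (\<Sum>i\<in>I. z i * u i) (\<Sum>i\<in>I. z i * v i) a (fst j) (snd j) \<alpha>)"
proof -
  have "(\<Sum>i\<in>I. z i * exchange_effect (u i) (v i) a d c \<alpha>)
      = exchange_effect (\<Sum>i\<in>I. z i * u i) (\<Sum>i\<in>I. z i * v i) a d c \<alpha>" for d c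
    by (simp add: exchange_effect_def distrib_left sum.distrib sum_distrib_right mult.assoc)
  then show ?thesis
    unfolding sum.cartesian_product'[of _ I J]
    by (subst sum.swap) (simp add: sum_distrib_left[symmetric] mult_ac)
qed

lemma exists_exchange_plan:
  fixes C :: "'c set" and a b :: 'c and m :: nat and w z :: "nat \<Rightarrow> real" and \<omega> :: "'c \<times> 'c \<Rightarrow> real"
  defines "E \<equiv> C - {a, b}"
    and "Tb \<equiv> {t \<in> rankings C. pos t b = 1}"
    and "Ti \<equiv> \<lambda>i. {t \<in> rankings C. pos t b = i \<and> pos t a = i + 1}"
  defines "Tba \<equiv> \<Union>i\<in>{1..m-1}. Ti i"
  assumes setting: "finite C" "card C = m" "3 \<le> m" "w 1 = 1" "w m = 0" "a \<in> C" "b \<in> C" "a \<noteq> b"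
    and z: "\<forall>i\<in>{1..m-1}. 0 \<le> z i"
    and \<omega>: "\<forall>k\<in>insert a E \<times> E. 0 \<le> \<omega> k" "sum \<omega> (insert a E \<times> E) = 1" "m = 3 \<or> (\<forall>c\<in>E. \<omega> (c, c) = 0)"
  shows "\<exists>x y. (\<forall>t\<in>Tba. 0 \<le> x t) \<and> (\<forall>t\<in>Tb. 0 \<le> y t) \<and> (\<forall>i\<in>{1..m-1}. sum x (Ti i) = z i)
    \<and> sum y Tb = sum x Tba
    \<and> (\<forall>\<alpha>\<in>C - {b}. (\<Sum>t\<in>Tb. y t * (1 - sigma w t \<alpha>)) - (\<Sum>t\<in>Tba. x t * (sigma w t b - sigma w t \<alpha>))
        = (\<Sum>k\<in>insert a E \<times> E. \<omega> k * exchange_effect (\<Sum>i=1..m-1. z i * (1 - w i))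
            (\<Sum>i=1..m-1. z i * w (i + 1)) a (fst k) (snd k) \<alpha>))"
proof -
  define K where "K = {1..m-1} \<times> (insert a E \<times> E)"
  obtain S where S: "\<And>i d c. i \<in> {1..m-1} \<Longrightarrow> d \<in> insert a E \<Longrightarrow> c \<in> E \<Longrightarrow>
      fst (S (i, d, c)) \<in> Ti i \<and> snd (S (i, d, c)) \<in> Tb
      \<and> (\<omega> (d, c) \<noteq> 0 \<longrightarrow> (\<forall>\<alpha>\<in>C - {b}.
          lead_gain w b (fst (S (i, d, c))) (snd (S (i, d, c))) \<alpha> = exchange_effect (1 - w i) (w (i + 1)) a d c \<alpha>))"
    unfolding Ti_def Tb_def E_def by (rule exists_exchange_pairs[OF setting \<omega>(3)[unfolded E_def]]) blast
  have src: "fst (S k) \<in> Ti (fst k)" "fst (S k) \<in> Tba" and tgt: "snd (S k) \<in> Tb"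
    and gain: "\<omega> (snd k) \<noteq> 0 \<Longrightarrow> \<forall>\<alpha>\<in>C - {b}. lead_gain w b (fst (S k)) (snd (S k)) \<alpha>
      = exchange_effect (1 - w (fst k)) (w (fst k + 1)) a (fst (snd k)) (snd (snd k)) \<alpha>"
    if "k \<in> K" for k
    using that S[of "fst k" "fst (snd k)" "snd (snd k)"] by (auto simp: K_def Tba_def)
  define \<nu> where "\<nu> k = z (fst k) * \<omega> (snd k)" for k
  define x where "x = pushforward \<nu> K (fst \<circ> S)"
  define y where "y = pushforward \<nu> K (snd \<circ> S)"
  have fin: "finite K" "finite Tb" "finite Tba"
    using setting finite_rankings[of C] by (auto simp: K_def E_def Tb_def Tba_def Ti_def)
  have \<nu>: "\<forall>k\<in>K. 0 \<le> \<nu> k"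
    using z \<omega>(1) by (auto simp: \<nu>_def K_def)
  have class_sums: "sum x (Ti i) = z i" if "i \<in> {1..m-1}" for i
  proof -
    have "{k \<in> K. fst (S k) \<in> Ti i} = {i} \<times> (insert a E \<times> E)"
      using src(1) that by (auto simp: K_def Ti_def)
    then show ?thesis
      using sum_pushforward_set[OF fin(1), of "Ti i" \<nu> "fst \<circ> S"] fin(3) that \<omega>(2)
      by (simp add: x_def \<nu>_def Tba_def Ti_def sum.cartesian_product' sum_distrib_left[symmetric])
  qed
  have images: "(snd \<circ> S) ` K \<subseteq> Tb" "(fst \<circ> S) ` K \<subseteq> Tba"
    using src(2) tgt by auto
  have totals: "sum y Tb = sum x Tba"
    using sum_pushforward_image[OF fin(1,2) images(1), of \<nu> "\<lambda>_. 1"]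
      sum_pushforward_image[OF fin(1,3) images(2), of \<nu> "\<lambda>_. 1"] by (simp add: x_def y_def)
  have margins: "(\<Sum>t\<in>Tb. y t * (1 - sigma w t \<alpha>)) - (\<Sum>t\<in>Tba. x t * (sigma w t b - sigma w t \<alpha>))
        = (\<Sum>k\<in>insert a E \<times> E. \<omega> k * exchange_effect (\<Sum>i=1..m-1. z i * (1 - w i))
            (\<Sum>i=1..m-1. z i * w (i + 1)) a (fst k) (snd k) \<alpha>)"
    if "\<alpha> \<in> C - {b}" for \<alpha>
  proof -
    have "(\<Sum>t\<in>Tb. y t * (1 - sigma w t \<alpha>)) - (\<Sum>t\<in>Tba. x t * (sigma w t b - sigma w t \<alpha>))
        = (\<Sum>k\<in>K. \<nu> k * lead_gain w b (fst (S k)) (snd (S k)) \<alpha>)"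
      unfolding x_def y_def
      by (rule margin_change_pushforward[OF fin(1,3,2)]) (use src(2) tgt setting(4) in \<open>auto simp: Tb_def\<close>)
    also have "\<dots> = (\<Sum>k\<in>K. \<nu> k * exchange_effect (1 - w (fst k)) (w (fst k + 1)) a (fst (snd k)) (snd (snd k)) \<alpha>)"
      using gain that by (intro sum.cong) (auto simp: \<nu>_def)
    also have "\<dots> = (\<Sum>k\<in>insert a E \<times> E. \<omega> k * exchange_effect (\<Sum>i=1..m-1. z i * (1 - w i))
            (\<Sum>i=1..m-1. z i * w (i + 1)) a (fst k) (snd k) \<alpha>)"
      unfolding K_def \<nu>_def by (rule sum_weighted_exchange_effect)
    finally show ?thesis .
  qed
  have "0 \<le> x t" "0 \<le> y t" for t
    using pushforward_nonneg[OF \<nu>] by (simp_all add: x_def y_def)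
  then show ?thesis
    by (intro exI[of _ x] exI[of _ y] conjI ballI) (simp_all add: class_sums totals margins)
qed

lemma sum_insert_Times:
  assumes "finite E" "finite F" "a \<notin> E"
  shows "(\<Sum>k\<in>insert a E \<times> F. g k) = (\<Sum>c\<in>F. g (a, c)) + sum g (E \<times> F)"
  using assms by (simp add: sum.cartesian_product')

lemma sum_exchange_effect:
  assumes "finite E" "a \<notin> E" "sum \<omega> (insert a E \<times> E) = 1"
  shows sum_exchange_effect_winner:
      "(\<Sum>k\<in>insert a E \<times> E. \<omega> k * exchange_effect B W a (fst k) (snd k) a) = B + W * sum \<omega> (E \<times> E)"
    and sum_exchange_effect_other: "e \<in> E \<Longrightarrow>
      (\<Sum>k\<in>insert a E \<times> E. \<omega> k * exchange_effect B W a (fst k) (snd k) e)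
        = B * (1 + (\<Sum>d\<in>insert a E. \<omega> (d, e))) - W * (\<Sum>c\<in>E. \<omega> (e, c))"
proof -
  have total: "(\<Sum>c\<in>E. \<omega> (a, c)) + sum \<omega> (E \<times> E) = 1"
    using assms sum_insert_Times[of E E a \<omega>] by simp
  have "(\<Sum>c\<in>E. \<omega> (a, c) * exchange_effect B W a a c a) = B * (\<Sum>c\<in>E. \<omega> (a, c))"
    using assms(2) by (auto simp: exchange_effect_def sum_distrib_left intro: sum.cong)
  moreover have "(\<Sum>k\<in>E \<times> E. \<omega> k * exchange_effect B W a (fst k) (snd k) a) = (B + W) * sum \<omega> (E \<times> E)"
    using assms(2) by (auto simp: exchange_effect_def sum_distrib_left intro: sum.cong)
  ultimately show "(\<Sum>k\<in>insert a E \<times> E. \<omega> k * exchange_effect B W a (fst k) (snd k) a)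
      = B + W * sum \<omega> (E \<times> E)"
    using assms(1,2) total[THEN arg_cong[where f = "\<lambda>x. B * x"]] by (simp add: sum_insert_Times algebra_simps)
  assume "e \<in> E"
  have if_sum: "(\<Sum>y\<in>E. if P then f y else 0) = (if P then sum f E else 0)" for P and f :: "'a \<Rightarrow> real"
    by simp
  have "(\<Sum>k\<in>insert a E \<times> E. \<omega> k * exchange_effect B W a (fst k) (snd k) e)
      = (\<Sum>k\<in>insert a E \<times> E. B * \<omega> k + B * (if snd k = e then \<omega> k else 0)
          - W * (if fst k = e then \<omega> k else 0))"
    using assms(2) \<open>e \<in> E\<close> by (intro sum.cong) (auto simp: exchange_effect_def algebra_simps)
  also have "\<dots> = B * (1 + (\<Sum>d\<in>insert a E. \<omega> (d, e))) - W * (\<Sum>c\<in>E. \<omega> (e, c))"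
    using assms \<open>e \<in> E\<close> if_sum
    by (simp add: sum.distrib sum_subtractf sum_distrib_left[symmetric] sum.cartesian_product' distrib_left)
  finally show "(\<Sum>k\<in>insert a E \<times> E. \<omega> k * exchange_effect B W a (fst k) (snd k) e)
        = B * (1 + (\<Sum>d\<in>insert a E. \<omega> (d, e))) - W * (\<Sum>c\<in>E. \<omega> (e, c))" .
qed

lemma exists_distribution_below:
  fixes K :: "'a \<Rightarrow> real"
  assumes "finite E" "E \<noteq> {}" "\<forall>c\<in>E. 0 \<le> K c" "0 \<le> D" "D \<le> sum K E"
  obtains p where "\<forall>c\<in>E. 0 \<le> p c" "sum p E = 1" "\<forall>c\<in>E. p c * D \<le> K c"
proof (cases "sum K E = 0")
  case True
  then show thesis
    using assms by (intro that[of "\<lambda>_. 1 / card E"]) auto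
next
  case False
  moreover have "0 \<le> sum K E"
    using assms(3) by (simp add: sum_nonneg)
  ultimately have "0 < sum K E" by linarith
  moreover have "K c / sum K E * D \<le> K c / sum K E * sum K E" if "c \<in> E" for c
    using that assms(3,5) \<open>0 < sum K E\<close> by (intro mult_left_mono) auto
  ultimately show thesis
    using assms(3) by (intro that[of "\<lambda>c. K c / sum K E"]) (auto simp: sum_divide_distrib[symmetric])
qed

lemma exists_fraction_covering_gap:
  fixes B W \<delta> :: real
  assumes "0 \<le> B" "0 \<le> W" "\<delta> \<le> B + W"
  obtains l where "0 \<le> l" "l \<le> 1" "\<delta> \<le> B + l * W" "l * W \<le> max 0 (\<delta> - B)"
proof (cases "\<delta> \<le> B")
  case True
  then show thesis
    using assms by (intro that[of 0]) auto
next
  case False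
  then have "0 < W" using assms by linarith
  then show thesis
    using False assms by (intro that[of "(\<delta> - B) / W"]) (auto simp: field_simps)
qed

lemma sum_if_eq_zero:
  fixes f :: "'a \<Rightarrow> 'b::ab_group_add"
  assumes "finite A" "x \<in> A"
  shows "(\<Sum>y\<in>A. if y = x then 0 else f y) = sum f A - f x"
  using assms by (simp add: sum.remove[of A x])

definition spread_mixture :: "'c \<Rightarrow> 'c set \<Rightarrow> real \<Rightarrow> ('c \<Rightarrow> real) \<Rightarrow> 'c \<times> 'c \<Rightarrow> real" where
  "spread_mixture a E l p = (\<lambda>(d, c). if d = a then (1 - l) / card E
     else if d = c then 0 else l * p d / (real (card E) - 1))"

lemma spread_mixture_row:
  assumes "finite E" "a \<notin> E" "2 \<le> card E" "e \<in> E"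
  shows "(\<Sum>c\<in>E. spread_mixture a E l p (e, c)) = l * p e"
proof -
  define r where "r = real (card E)"
  have "(\<Sum>c\<in>E. spread_mixture a E l p (e, c)) = (\<Sum>c\<in>E. if c = e then 0 else l * p e / (r - 1))"
    using assms(2,4) by (intro sum.cong) (auto simp: spread_mixture_def r_def)
  also have "\<dots> = r * (l * p e / (r - 1)) - l * p e / (r - 1)"
    using assms(1,4) sum_if_eq_zero[of E e "\<lambda>_. l * p e / (r - 1)"] by (simp add: r_def)
  also have "\<dots> = (r - 1) * (l * p e / (r - 1))"
    by (simp add: left_diff_distrib diff_divide_distrib)
  finally show ?thesis
    using assms(3) by (simp add: r_def)
qed

lemma spread_mixture_column:
  assumes "finite E" "a \<notin> E" "2 \<le> card E" "sum p E = 1" "e \<in> E"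
  shows "(\<Sum>d\<in>insert a E. spread_mixture a E l p (d, e))
    = (1 - l) / card E + l * (1 - p e) / (real (card E) - 1)"
proof -
  have "(\<Sum>d\<in>E. spread_mixture a E l p (d, e)) = (\<Sum>d\<in>E. if d = e then 0 else l * p d / (real (card E) - 1))"
    using assms(2) by (intro sum.cong) (auto simp: spread_mixture_def)
  also have "\<dots> = l * (1 - p e) / (real (card E) - 1)"
    using assms(1,4,5) sum_if_eq_zero[of E e "\<lambda>d. l * p d / (real (card E) - 1)"]
    by (simp add: sum_divide_distrib[symmetric] sum_distrib_left[symmetric] diff_divide_distrib right_diff_distrib)
  finally show ?thesis
    using assms(1,2) by (simp add: spread_mixture_def)
qed

lemma sum_spread_mixture:
  assumes "finite E" "a \<notin> E" "2 \<le> card E" "sum p E = 1"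
  shows "sum (spread_mixture a E l p) (E \<times> E) = l" "sum (spread_mixture a E l p) (insert a E \<times> E) = 1"
proof -
  show "sum (spread_mixture a E l p) (E \<times> E) = l"
    using spread_mixture_row[OF assms(1-3)] assms(4)
    by (simp add: sum.cartesian_product' sum_distrib_left[symmetric])
  moreover have "(\<Sum>c\<in>E. spread_mixture a E l p (a, c)) = 1 - l"
    using assms(3) by (simp add: spread_mixture_def)
  ultimately show "sum (spread_mixture a E l p) (insert a E \<times> E) = 1"
    using assms(1,2) by (simp add: sum_insert_Times)
qed

(* The losses caused by demoting a are charged to each e in proportion to its slack K e;
   the budget inequality says that the slacks suffice. *)
lemma exists_spread_mixture:
  fixes E :: "'c set" and s :: "'c \<Rightarrow> real" and B W l :: real
  assumes "finite E" "a \<notin> E" "2 \<le> card E" "0 \<le> B" "0 \<le> W" "\<forall>c\<in>E. 0 \<le> s c" "0 \<le> l" "l \<le> 1"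
    and budget: "l * W \<le> (card E + 1) * B + sum s E"
  obtains p where "\<forall>k\<in>insert a E \<times> E. 0 \<le> spread_mixture a E l p k"
    "sum (spread_mixture a E l p) (insert a E \<times> E) = 1" "sum (spread_mixture a E l p) (E \<times> E) = l"
    "\<forall>e\<in>E. - s e \<le> B * (1 + (\<Sum>d\<in>insert a E. spread_mixture a E l p (d, e)))
      - W * (\<Sum>c\<in>E. spread_mixture a E l p (e, c))"
proof -
  define r where "r = real (card E)"
  have r: "2 \<le> r"
    using assms(3) by (simp add: r_def)
  define K where "K e = B + s e + l * B / (r - 1) + (1 - l) * B / r" for e
  have "sum K E = r * B + sum s E + r * (l * B / (r - 1)) + (1 - l) * B"
    using r by (simp add: K_def sum.distrib r_def)
  also have "r * (l * B / (r - 1)) = l * B + l * B / (r - 1)"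
    using r by (simp add: field_simps)
  finally have "l * W + l * B / (r - 1) \<le> sum K E"
    using budget by (simp add: r_def algebra_simps)
  moreover have "\<forall>c\<in>E. 0 \<le> K c" "0 \<le> l * W + l * B / (r - 1)"
    using assms r by (auto simp: K_def)
  moreover have "E \<noteq> {}"
    using assms(3) by auto
  ultimately obtain p where p: "\<forall>c\<in>E. 0 \<le> p c" "sum p E = 1"
      "\<forall>c\<in>E. p c * (l * W + l * B / (r - 1)) \<le> K c"
    using exists_distribution_below[OF assms(1)] by blast
  have "- s e \<le> B * (1 + (\<Sum>d\<in>insert a E. spread_mixture a E l p (d, e)))
      - W * (\<Sum>c\<in>E. spread_mixture a E l p (e, c))" if "e \<in> E" for e
  proof -
    have row: "(\<Sum>c\<in>E. spread_mixture a E l p (e, c)) = l * p e"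
      by (rule spread_mixture_row[OF assms(1-3) that])
    have col: "(\<Sum>d\<in>insert a E. spread_mixture a E l p (d, e)) = (1 - l) / r + l * (1 - p e) / (r - 1)"
      using spread_mixture_column[OF assms(1-3) p(2) that] by (simp add: r_def)
    have "B * (1 + (\<Sum>d\<in>insert a E. spread_mixture a E l p (d, e)))
        - W * (\<Sum>c\<in>E. spread_mixture a E l p (e, c)) + s e = K e - p e * (l * W + l * B / (r - 1))"
      using r by (simp add: row col K_def divide_simps) (simp add: algebra_simps)
    moreover have "p e * (l * W + l * B / (r - 1)) \<le> K e"
      using p(3) that by blast
    ultimately show ?thesis
      by linarith
  qed
  moreover have "\<forall>k\<in>insert a E \<times> E. 0 \<le> spread_mixture a E l p k"
    using assms(7,8) p(1) r by (auto simp: spread_mixture_def r_def)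
  ultimately show thesis
    using sum_spread_mixture[OF assms(1-3) p(2)] by (intro that) auto
qed

lemma exists_mixture:
  fixes E :: "'c set" and s :: "'c \<Rightarrow> real" and B W l :: real
  assumes "finite E" "E \<noteq> {}" "a \<notin> E" "0 \<le> B" "0 \<le> W" "\<forall>c\<in>E. 0 \<le> s c" "0 \<le> l" "l \<le> 1"
    and budget: "l * W \<le> (card E + 1) * B + sum s E"
  obtains \<omega> :: "'c \<times> 'c \<Rightarrow> real"
  where "\<forall>k\<in>insert a E \<times> E. 0 \<le> \<omega> k" "sum \<omega> (insert a E \<times> E) = 1" "sum \<omega> (E \<times> E) = l"
    "card E = 1 \<or> (\<forall>c\<in>E. \<omega> (c, c) = 0)"
    "\<forall>e\<in>E. - s e \<le> B * (1 + (\<Sum>d\<in>insert a E. \<omega> (d, e))) - W * (\<Sum>c\<in>E. \<omega> (e, c))"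
proof (cases "card E = 1")
  case True
  then obtain e where E: "E = {e}" by (rule card_1_singletonE)
  define \<omega> :: "'c \<times> 'c \<Rightarrow> real" where "\<omega> = (\<lambda>(d, c). if d = a then 1 - l else l)"
  have "- s e \<le> B * (1 + (\<Sum>d\<in>insert a E. \<omega> (d, e))) - W * (\<Sum>c\<in>E. \<omega> (e, c))"
    using budget assms(3) by (simp add: E \<omega>_def algebra_simps)
  then show thesis
    using assms E by (intro that[of \<omega>]) (auto simp: \<omega>_def)
next
  case False
  then have "2 \<le> card E"
    using assms(1,2) card_0_eq[of E] by linarith
  then obtain p where "\<forall>k\<in>insert a E \<times> E. 0 \<le> spread_mixture a E l p k"
    "sum (spread_mixture a E l p) (insert a E \<times> E) = 1" "sum (spread_mixture a E l p) (E \<times> E) = l"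
    "\<forall>e\<in>E. - s e \<le> B * (1 + (\<Sum>d\<in>insert a E. spread_mixture a E l p (d, e)))
      - W * (\<Sum>c\<in>E. spread_mixture a E l p (e, c))"
    using exists_spread_mixture[OF assms(1,3) _ assms(4-9)] by blast
  moreover have "\<forall>c\<in>E. spread_mixture a E l p (c, c) = 0"
    using assms(3) by (auto simp: spread_mixture_def)
  ultimately show thesis
    by (intro that) auto
qed

lemma exists_catch_up_mixture:
  fixes C :: "'c set" and a b :: 'c and sc :: "'c \<Rightarrow> real" and B W :: real
  defines "E \<equiv> C - {a, b}"
  assumes "finite C" "card C = m" "3 \<le> m" "a \<in> C" "b \<in> C" "a \<noteq> b" "\<forall>c\<in>E. sc c \<le> sc b"
    and "0 \<le> B" "0 \<le> W" "sc a - sc b \<le> B + W"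
    and "sc a - sc b - B \<le> real (card E + 1) * B + (\<Sum>c\<in>E. sc b - sc c)"
  obtains \<omega> :: "'c \<times> 'c \<Rightarrow> real"
  where "\<forall>k\<in>insert a E \<times> E. 0 \<le> \<omega> k" "sum \<omega> (insert a E \<times> E) = 1" "m = 3 \<or> (\<forall>c\<in>E. \<omega> (c, c) = 0)"
    "\<forall>\<alpha>\<in>C - {b}. sc \<alpha> - sc b \<le> (\<Sum>k\<in>insert a E \<times> E. \<omega> k * exchange_effect B W a (fst k) (snd k) \<alpha>)"
proof -
  define s where "s c = sc b - sc c" for c
  have E: "finite E" "a \<notin> E" "card E = m - 2"
    using assms(2-7) by (auto simp: E_def card_Diff_subset)
  then have "E \<noteq> {}"
    using assms(4) by auto
  have s: "\<forall>c\<in>E. 0 \<le> s c"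
    using assms(8) by (simp add: s_def)
  obtain l where l: "0 \<le> l" "l \<le> 1" "sc a - sc b \<le> B + l * W" "l * W \<le> max 0 (sc a - sc b - B)"
    using exists_fraction_covering_gap[OF assms(9-11)] by blast
  have "0 \<le> real (card E + 1) * B + sum s E"
    using assms(9) s by (simp add: sum_nonneg)
  then have "l * W \<le> real (card E + 1) * B + sum s E"
    using l(4) assms(12) by (simp add: s_def)
  then obtain \<omega> where \<omega>: "\<forall>k\<in>insert a E \<times> E. 0 \<le> \<omega> k" "sum \<omega> (insert a E \<times> E) = 1" "sum \<omega> (E \<times> E) = l"
    "card E = 1 \<or> (\<forall>c\<in>E. \<omega> (c, c) = 0)"
    "\<forall>e\<in>E. - s e \<le> B * (1 + (\<Sum>d\<in>insert a E. \<omega> (d, e))) - W * (\<Sum>c\<in>E. \<omega> (e, c))"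
    using exists_mixture[OF E(1) \<open>E \<noteq> {}\<close> E(2) assms(9,10) s l(1,2)] by auto
  have "sc \<alpha> - sc b \<le> (\<Sum>k\<in>insert a E \<times> E. \<omega> k * exchange_effect B W a (fst k) (snd k) \<alpha>)"
    if "\<alpha> \<in> C - {b}" for \<alpha>
  proof (cases "\<alpha> = a")
    case True
    then show ?thesis
      using sum_exchange_effect_winner[OF E(1,2) \<omega>(2), of B W] \<omega>(3) l(3) by (simp add: algebra_simps)
  next
    case False
    then have "\<alpha> \<in> E"
      using that by (simp add: E_def)
    then show ?thesis
      using sum_exchange_effect_other[OF E(1,2) \<omega>(2), of _ B W] \<omega>(5) by (simp add: s_def)
  qed
  moreover have "m = 3 \<or> (\<forall>c\<in>E. \<omega> (c, c) = 0)"
    using \<omega>(4) E(3) assms(4) by auto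
  ultimately show thesis
    using \<omega>(1,2) by (intro that) auto
qed

lemma sum_score:
  assumes "finite C"
  shows "(\<Sum>\<alpha>\<in>C. score C w N \<alpha>) = (\<Sum>t\<in>rankings C. real (N t)) * (\<Sum>i=1..card C. w i)"
proof -
  have "(\<Sum>\<alpha>\<in>C. w (pos t \<alpha>)) = (\<Sum>i=1..card C. w i)" if "t \<in> rankings C" for t
    using sum.reindex_bij_betw[OF bij_betw_pos[OF that], of w] by simp
  then show ?thesis
    unfolding score_def sigma_def
    by (subst sum.swap) (simp add: sum_distrib_left[symmetric] sum_distrib_right)
qed

lemma score_gap_bound:
  assumes "finite C" "card C = m" "a \<in> C" "b \<in> C" "a \<noteq> b" "(\<Sum>t\<in>rankings C. N t) = n"
    and "real n * ((\<Sum>i=1..m. w i) / real m) - score C w N b \<le> B"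
  shows "score C w N a - score C w N b - B
    \<le> real (card (C - {a, b}) + 1) * B + (\<Sum>c\<in>C - {a, b}. score C w N b - score C w N c)"
proof -
  have C: "C = insert a (insert b (C - {a, b}))"
    using assms(3,4) by auto
  have "card {a, b} \<le> m"
    using assms(1-4) card_mono[of C "{a, b}"] by simp
  then have "2 \<le> m"
    using assms(5) by simp
  have "(\<Sum>\<alpha>\<in>C. score C w N \<alpha>) = score C w N a + score C w N b + (\<Sum>c\<in>C - {a, b}. score C w N c)"
    using assms(1,5) by (subst C) simp
  moreover have "(\<Sum>\<alpha>\<in>C. score C w N \<alpha>) \<le> real m * (B + score C w N b)"
    using assms(7) \<open>2 \<le> m\<close>
    by (simp add: sum_score[OF assms(1)] assms(2,6) of_nat_sum[symmetric] field_simps)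
  moreover have "card (C - {a, b}) = m - 2"
    using assms(1-5) by (simp add: card_Diff_subset)
  ultimately show ?thesis
    using \<open>2 \<le> m\<close> by (simp add: sum_subtractf algebra_simps)
qed

theorem theorem9:
  fixes C :: "'c set" and m n :: nat and w :: "nat \<Rightarrow> real"
    and N :: "'c list \<Rightarrow> nat" and a b :: 'c and z :: "nat \<Rightarrow> real"
  assumes finC: "finite C" and cardC: "card C = m" and m3: "m \<ge> 3"
    and w1: "w 1 = 1" and wm: "w m = 0"
    and wmono: "\<And>i j. 1 \<le> i \<Longrightarrow> i \<le> j \<Longrightarrow> j \<le> m \<Longrightarrow> w j \<le> w i"
    and Nsum: "(\<Sum>t\<in>rankings C. N t) = n"
    and aC: "a \<in> C" and bC: "b \<in> C" and ab: "b \<noteq> a"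
    and a_win: "\<And>\<alpha>. \<alpha> \<in> C \<Longrightarrow> \<alpha> \<noteq> a \<Longrightarrow> score C w N a > score C w N \<alpha>"
    and b_second: "\<And>\<alpha>. \<alpha> \<in> C \<Longrightarrow> \<alpha> \<noteq> a \<Longrightarrow> score C w N b \<ge> score C w N \<alpha>"
    and z_nonneg: "\<And>i. 1 \<le> i \<Longrightarrow> i \<le> m - 1 \<Longrightarrow> z i \<ge> 0"
    and z1: "(\<Sum>i=1..m-1. z i * (1 - w i + w (i+1))) \<ge> score C w N a - score C w N b"
    and z2: "(\<Sum>i=1..m-1. z i * (1 - w i))
               \<ge> real n * ((\<Sum>i=1..m. w i) / real m) - score C w N b"
  shows "\<exists>x y :: 'c list \<Rightarrow> real.
    let Tb = {t\<in>rankings C. pos t b = 1};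
        Ti = (\<lambda>i. {t\<in>rankings C. pos t b = i \<and> pos t a = i + 1});
        Tba = (\<Union>i\<in>{1..m-1}. Ti i)
    in (\<forall>t\<in>Tba. x t \<ge> 0) \<and> (\<forall>t\<in>Tb. y t \<ge> 0)
       \<and> (\<forall>i\<in>{1..m-1}. (\<Sum>t\<in>Ti i. x t) = z i)
       \<and> (\<Sum>t\<in>Tb. y t) = (\<Sum>t\<in>Tba. x t)
       \<and> (\<forall>\<alpha>\<in>C. \<alpha> \<noteq> b \<longrightarrow>
            (\<Sum>t\<in>Tb. y t * (1 - sigma w t \<alpha>))
              - (\<Sum>t\<in>Tba. x t * (sigma w t b - sigma w t \<alpha>))
            \<ge> score C w N \<alpha> - score C w N b)"
proof -
  define E where "E = C - {a, b}"
  define B where "B = (\<Sum>i=1..m-1. z i * (1 - w i))"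
  define W where "W = (\<Sum>i=1..m-1. z i * w (i + 1))"
  have w_bounds: "0 \<le> w i \<and> w i \<le> 1" if "1 \<le> i" "i \<le> m" for i
    using wmono[of i m] wmono[of 1 i] that w1 wm by simp
  have "0 \<le> B" "0 \<le> W"
    using z_nonneg w_bounds m3 unfolding B_def W_def by (auto intro!: sum_nonneg)
  moreover have "score C w N a - score C w N b \<le> B + W"
    using z1 by (simp add: B_def W_def sum.distrib[symmetric] algebra_simps)
  moreover note score_gap_bound[OF finC cardC aC bC ab[symmetric] Nsum z2[folded B_def]]
  moreover have "\<forall>c\<in>E. score C w N c \<le> score C w N b"
    using b_second by (simp add: E_def)
  ultimately obtain \<omega> where \<omega>: "\<forall>k\<in>insert a E \<times> E. 0 \<le> \<omega> k" "sum \<omega> (insert a E \<times> E) = 1"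
      "m = 3 \<or> (\<forall>c\<in>E. \<omega> (c, c) = 0)"
      "\<forall>\<alpha>\<in>C - {b}. score C w N \<alpha> - score C w N b
        \<le> (\<Sum>k\<in>insert a E \<times> E. \<omega> k * exchange_effect B W a (fst k) (snd k) \<alpha>)"
    using exists_catch_up_mixture[OF finC cardC m3 aC bC ab[symmetric], of "score C w N" B W]
    unfolding E_def by blast
  have "\<forall>i\<in>{1..m-1}. 0 \<le> z i"
    using z_nonneg by simp
  from exists_exchange_plan[OF finC cardC m3 w1 wm aC bC ab[symmetric] this \<omega>(1-3)[unfolded E_def],
      folded B_def W_def E_def]
  show ?thesis
    unfolding Let_def using \<omega>(4) by (smt (verit) Diff_iff singletonD)
qed

end
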